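(* Let $(\Omega,\mathcal{F},\mathbb{P})$ be a probability space, let $d\in\mathbb{N}$, $\eta\in(0,1)$, let $X_n\colon\Omega\to\mathbb{R}^d$, $n\in\mathbb{N}$, be i.i.d. random variables with $\mathbb{E}[\|X_1\|]<\infty$, let $A=\{\sum_{n=1}^\infty\eta(1-\eta)^{n-1}\|X_n\|<\infty\}$, and let $\chi\colon\Omega\to\mathbb{R}^d$ be a random variable satisfying $\chi(\omega)=\sum_{n=1}^\infty\eta(1-\eta)^{n-1}X_n(\omega)$ for all $\omega\in A$. Then (i) $A\in\mathcal{F}$ and $\mathbb{P}(A)=1$, and (ii) $\operatorname{supp}(X_1)\subseteq\operatorname{supp}(\chi)$.
   Context: For a Borel measure $\mu$ on $\mathbb{R}^d$, $\operatorname{supp}(\mu)=\{x\in\mathbb{R}^d\colon\mu(B)>0\text{ for every open }B\ni x\}$. For a random variable $X$, $\operatorname{supp}(X)=\operatorname{supp}(\mathbb{P}_X)$ where $\mathbb{P}_X$ is the law of $X$. $\|\cdot\|$ is the Euclidean norm. *)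

theory Defs
  imports "HOL-Probability.Probability"
begin

definition measure_support :: "'a::topological_space measure \<Rightarrow> 'a set" where
  "measure_support \<mu> = {x. \<forall>B. open B \<longrightarrow> x \<in> B \<longrightarrow> emeasure \<mu> B > 0}"

definition rv_support :: "'b measure \<Rightarrow> ('b \<Rightarrow> 'a::topological_space) \<Rightarrow> 'a set" where
  "rv_support M X = measure_support (distr M borel X)"

end

theory Submission
  imports Defs
begin

text \<open>The weights \<open>c n = \<eta> (1 - \<eta>)\<^sup>n\<close> are nonnegative with sum 1, so the series
  \<open>\<Sum>n. c n \<parallel>X n\<parallel>\<close> has expectation \<open>E \<parallel>X 0\<parallel> < \<infinity>\<close> and converges almost surely.
  For the supports, fix \<open>x\<close> in the support of \<open>X 0\<close> and \<open>\<delta> > 0\<close>. Whenever the first \<open>K\<close>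
  variables lie in the \<open>\<delta>\<close>-ball around \<open>x\<close> and the weighted tail
  \<open>\<Sum>n\<ge>K. c n \<parallel>X n - x\<parallel>\<close> is below \<open>\<delta>\<close>, the convex combination \<open>\<chi>\<close> lies within
  \<open>2\<delta>\<close> of \<open>x\<close>. The first event has positive probability because every \<open>X n\<close> has the
  support of \<open>X 0\<close>; the tails tend to 0 almost surely, so the second event has positive
  probability for some \<open>K\<close>; and the two events are independent, since they depend on disjoint
  blocks of the sequence.\<close>

lemma summable_weighted_norm_diff:
  fixes Y :: "nat \<Rightarrow> 'a::real_normed_vector"
  assumes "summable c" "\<And>n. 0 \<le> c n" "summable (\<lambda>n. c n * norm (Y n))"
  shows "summable (\<lambda>n. c n * norm (Y n - x))"
proof (rule summable_comparison_test)
  show "\<exists>N. \<forall>n\<ge>N. norm (c n * norm (Y n - x)) \<le> c n * norm (Y n) + c n * norm x"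
    using assms(2) by (auto simp: abs_mult distrib_left[symmetric] intro!: mult_left_mono norm_triangle_ineq4)
  show "summable (\<lambda>n. c n * norm (Y n) + c n * norm x)"
    using assms(1,3) by (intro summable_add summable_mult2)
qed

lemma norm_suminf_scaleR_diff_le:
  fixes Y :: "nat \<Rightarrow> 'a::banach"
  assumes "c sums 1" "\<And>n. 0 \<le> c n" "summable (\<lambda>n. c n * norm (Y n))"
  shows "norm ((\<Sum>n. c n *\<^sub>R Y n) - x) \<le> (\<Sum>n. c n * norm (Y n - x))"
proof -
  have Y: "summable (\<lambda>n. c n *\<^sub>R Y n)"
    by (rule summable_norm_cancel) (use assms in simp)
  have x: "(\<lambda>n. c n *\<^sub>R x) sums x"
    using sums_scaleR_left[OF assms(1)] by simp
  have "(\<Sum>n. c n *\<^sub>R Y n) - x = (\<Sum>n. c n *\<^sub>R (Y n - x))"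
    using suminf_diff[OF Y sums_summable[OF x]] sums_unique[OF x]
    by (simp add: scaleR_diff_right)
  also have "norm \<dots> \<le> (\<Sum>n. norm (c n *\<^sub>R (Y n - x)))"
    using summable_weighted_norm_diff[OF sums_summable[OF assms(1)] assms(2,3)] assms(2)
    by (intro summable_norm) simp
  also have "\<dots> = (\<Sum>n. c n * norm (Y n - x))"
    using assms(2) by simp
  finally show ?thesis .
qed

lemma norm_suminf_scaleR_diff_less:
  fixes Y :: "nat \<Rightarrow> 'a::banach"
  assumes "c sums 1" "\<And>n. 0 \<le> c n" "summable (\<lambda>n. c n * norm (Y n))"
    and head: "\<And>n. n < K \<Longrightarrow> norm (Y n - x) < \<delta>" "0 \<le> \<delta>"
    and tail: "(\<Sum>n. ennreal (c (n + K) * norm (Y (n + K) - x))) < ennreal \<delta>'"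
  shows "norm ((\<Sum>n. c n *\<^sub>R Y n) - x) < \<delta> + \<delta>'"
proof -
  let ?g = "\<lambda>n. c n * norm (Y n - x)"
  have g: "summable ?g" "\<And>n. 0 \<le> ?g n"
    using summable_weighted_norm_diff[OF sums_summable[OF assms(1)] assms(2,3)] assms(2) by auto
  have g_tail: "summable (\<lambda>n. ?g (n + K))"
    using g(1) by (rule summable_ignore_initial_segment)
  then have "0 \<le> (\<Sum>n. ?g (n + K))"
    using g(2) by (intro suminf_nonneg) auto
  then have tail_less: "(\<Sum>n. ?g (n + K)) < \<delta>'"
    using tail g(2) g_tail by (simp add: suminf_ennreal2 ennreal_less_iff)
  have "(\<Sum>n<K. ?g n) \<le> (\<Sum>n<K. c n * \<delta>)"
    using head assms(2) by (intro sum_mono mult_left_mono) (auto intro: less_imp_le)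
  also have "\<dots> = (\<Sum>n<K. c n) * \<delta>"
    by (simp add: sum_distrib_right)
  also have "\<dots> \<le> 1 * \<delta>"
    using sum_le_suminf[OF sums_summable[OF assms(1)], of "{..<K}"] assms(1,2) head(2)
    by (intro mult_right_mono) (auto simp: sums_iff)
  finally have "(\<Sum>n<K. ?g n) \<le> \<delta>" by simp
  moreover have "(\<Sum>n. ?g n) = (\<Sum>n. ?g (n + K)) + (\<Sum>n<K. ?g n)"
    using g(1) by (rule suminf_split_initial_segment)
  ultimately show ?thesis
    using norm_suminf_scaleR_diff_le[OF assms(1-3), of x] tail_less by linarith
qed

lemma ex_weighted_tail_ennreal_less:
  fixes Y :: "nat \<Rightarrow> 'a::real_normed_vector"
  assumes "summable c" "\<And>n. 0 \<le> c n" "summable (\<lambda>n. c n * norm (Y n))" "0 < \<delta>"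
  shows "\<exists>K. (\<Sum>n. ennreal (c (n + K) * norm (Y (n + K) - x))) < ennreal \<delta>"
proof -
  let ?g = "\<lambda>n. c n * norm (Y n - x)"
  have g: "summable ?g" "\<And>n. 0 \<le> ?g n"
    using summable_weighted_norm_diff[OF assms(1-3)] assms(2) by auto
  obtain K where "norm (\<Sum>n. ?g (n + K)) < \<delta>"
    using suminf_exist_split[OF assms(4) g(1)] by blast
  moreover have "(\<Sum>n. ennreal (?g (n + K))) = ennreal (\<Sum>n. ?g (n + K))"
    using g by (intro suminf_ennreal2) (auto intro: summable_ignore_initial_segment)
  ultimately have "(\<Sum>n. ennreal (?g (n + K))) < ennreal \<delta>"
    using assms(4) by (simp add: ennreal_lessI)
  then show ?thesis ..
qed

lemma summable_iff_suminf_ennreal_ne_top: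
  assumes "\<And>n. 0 \<le> f n"
  shows "summable f \<longleftrightarrow> (\<Sum>n. ennreal (f n)) \<noteq> \<top>"
  using summable_suminf_not_top[OF assms] suminf_ennreal2[OF assms] by auto

lemma sets_Collect_summable_nonneg:
  fixes f :: "nat \<Rightarrow> 'a \<Rightarrow> real"
  assumes [measurable]: "\<And>n. f n \<in> borel_measurable M" and "\<And>n x. 0 \<le> f n x"
  shows "{x \<in> space M. summable (\<lambda>n. f n x)} \<in> sets M"
  using assms(2) by (simp add: summable_iff_suminf_ennreal_ne_top)

lemma in_rv_support_iff:
  assumes "Y \<in> borel_measurable M"
  shows "x \<in> rv_support M Y \<longleftrightarrow> (\<forall>B. open B \<longrightarrow> x \<in> B \<longrightarrow> 0 < emeasure M (Y -` B \<inter> space M))"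
  using assms by (auto simp: rv_support_def measure_support_def emeasure_distr)

lemma AE_summable_weighted_norm:
  fixes X :: "nat \<Rightarrow> 'w \<Rightarrow> 'a::{real_normed_vector, second_countable_topology}"
  assumes [measurable]: "\<And>n. X n \<in> borel_measurable M"
    and ident: "\<And>n. distr M borel (X n) = distr M borel (X 0)"
    and "integrable M (\<lambda>\<omega>. norm (X 0 \<omega>))" "summable c" "\<And>n. 0 \<le> c n"
  shows "AE \<omega> in M. summable (\<lambda>n. c n * norm (X n \<omega>))"
proof -
  have same_mean: "(\<integral>\<^sup>+\<omega>. norm (X n \<omega>) \<partial>M) = (\<integral>\<^sup>+\<omega>. norm (X 0 \<omega>) \<partial>M)" for n
  proof -
    have "(\<integral>\<^sup>+\<omega>. norm (X n \<omega>) \<partial>M) = (\<integral>\<^sup>+y. norm y \<partial>distr M borel (X n))"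
      by (simp add: nn_integral_distr)
    also have "\<dots> = (\<integral>\<^sup>+\<omega>. norm (X 0 \<omega>) \<partial>M)"
      unfolding ident[of n] by (simp add: nn_integral_distr)
    finally show ?thesis .
  qed
  have "(\<integral>\<^sup>+\<omega>. (\<Sum>n. ennreal (c n * norm (X n \<omega>))) \<partial>M)
      = (\<Sum>n. \<integral>\<^sup>+\<omega>. ennreal (c n * norm (X n \<omega>)) \<partial>M)"
    by (rule nn_integral_suminf) measurable
  also have "\<dots> = (\<Sum>n. ennreal (c n) * (\<integral>\<^sup>+\<omega>. norm (X 0 \<omega>) \<partial>M))"
  proof (rule suminf_cong)
    fix n
    show "(\<integral>\<^sup>+\<omega>. ennreal (c n * norm (X n \<omega>)) \<partial>M) = ennreal (c n) * (\<integral>\<^sup>+\<omega>. norm (X 0 \<omega>) \<partial>M)"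
      using assms(5) same_mean[of n] by (simp add: ennreal_mult nn_integral_cmult)
  qed
  also have "\<dots> = ennreal (suminf c) * (\<integral>\<^sup>+\<omega>. norm (X 0 \<omega>) \<partial>M)"
    using assms(4,5) by (simp add: ennreal_suminf_multc suminf_ennreal2)
  also have "\<dots> < \<top>"
    using assms(3) by (simp add: integrable_iff_bounded ennreal_mult_less_top)
  finally have "(\<integral>\<^sup>+\<omega>. (\<Sum>n. ennreal (c n * norm (X n \<omega>))) \<partial>M) \<noteq> \<infinity>"
    by simp
  then have "AE \<omega> in M. (\<Sum>n. ennreal (c n * norm (X n \<omega>))) \<noteq> \<infinity>"
    by (intro nn_integral_PInf_AE) measurable
  then show ?thesis
    using assms(5) by (simp add: summable_iff_suminf_ennreal_ne_top)
qed

lemma (in prob_space) indep_vars_prob_restrict_Int: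
  assumes "indep_vars M' X I" "J \<inter> L = {}" "J \<subseteq> I" "L \<subseteq> I"
    and "S \<in> sets (PiM J M')" "T \<in> sets (PiM L M')"
  shows "prob ((\<lambda>\<omega>. \<lambda>i\<in>J. X i \<omega>) -` S \<inter> (\<lambda>\<omega>. \<lambda>i\<in>L. X i \<omega>) -` T \<inter> space M) =
    prob ((\<lambda>\<omega>. \<lambda>i\<in>J. X i \<omega>) -` S \<inter> space M) * prob ((\<lambda>\<omega>. \<lambda>i\<in>L. X i \<omega>) -` T \<inter> space M)"
proof -
  have "(\<lambda>\<omega>. (\<lambda>i\<in>J. X i \<omega>, \<lambda>i\<in>L. X i \<omega>)) -` (S \<times> T) \<inter> space M
      = (\<lambda>\<omega>. \<lambda>i\<in>J. X i \<omega>) -` S \<inter> (\<lambda>\<omega>. \<lambda>i\<in>L. X i \<omega>) -` T \<inter> space M"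
    by auto
  with indep_varD[OF indep_var_restrict[OF assms(1-4)] assms(5,6)] show ?thesis
    by simp
qed

lemma (in prob_space) indep_vars_prob_all_pos:
  assumes "indep_vars M' X I" "finite J" "J \<subseteq> I" "\<And>i. i \<in> J \<Longrightarrow> S i \<in> sets (M' i)"
    and "\<And>i. i \<in> J \<Longrightarrow> 0 < prob (X i -` S i \<inter> space M)"
  shows "0 < prob {\<omega> \<in> space M. \<forall>i\<in>J. X i \<omega> \<in> S i}"
proof (cases "J = {}")
  case True
  then show ?thesis by (simp add: prob_space)
next
  case False
  then have "{\<omega> \<in> space M. \<forall>i\<in>J. X i \<omega> \<in> S i} = (\<Inter>i\<in>J. X i -` S i \<inter> space M)"
    by auto
  with indep_varsD[OF assms(1) False assms(2-4)] show ?thesis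
    using assms(5) by (simp add: prod_pos)
qed

lemma (in prob_space) ex_prob_pos_if_AE_ex:
  fixes F :: "nat \<Rightarrow> 'a set"
  assumes "AE \<omega> in M. \<exists>k. \<omega> \<in> F k" "\<And>k. F k \<in> events"
  shows "\<exists>k. 0 < prob (F k)"
proof (rule ccontr)
  assume "\<nexists>k. 0 < prob (F k)"
  then have "emeasure M (F k) = 0" for k
    using measure_nonneg[of M "F k"] by (simp add: emeasure_eq_measure antisym not_less)
  then have "(\<Union>k. F k) \<in> null_sets M"
    using assms(2) by (auto intro: emeasure_UN_eq_0)
  then have "AE \<omega> in M. \<omega> \<notin> (\<Union>k. F k)"
    by (rule AE_not_in)
  with assms(1) have "AE \<omega> in M. False"
    by eventually_elim auto
  then show False
    by (simp add: AE_False)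
qed

lemma (in prob_space) ex_prob_weighted_tail_less_pos:
  fixes X :: "nat \<Rightarrow> 'a \<Rightarrow> 'b::{real_normed_vector, second_countable_topology}" and \<delta> :: real
  assumes [measurable]: "\<And>n. X n \<in> borel_measurable M"
    and "summable c" "\<And>n. 0 \<le> c n" "AE \<omega> in M. summable (\<lambda>n. c n * norm (X n \<omega>))" "0 < \<delta>"
  shows "\<exists>K. 0 < prob {\<omega> \<in> space M. (\<Sum>n. ennreal (c (n + K) * norm (X (n + K) \<omega> - x))) < \<delta>}"
proof -
  let ?F = "\<lambda>K. {\<omega> \<in> space M. (\<Sum>n. ennreal (c (n + K) * norm (X (n + K) \<omega> - x))) < \<delta>}"
  have "AE \<omega> in M. \<exists>K. \<omega> \<in> ?F K"
    using assms(4) AE_space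
  proof eventually_elim
    case (elim \<omega>)
    then obtain K where "(\<Sum>n. ennreal (c (n + K) * norm (X (n + K) \<omega> - x))) < \<delta>"
      using ex_weighted_tail_ennreal_less[OF assms(2,3) elim(1) assms(5)] by blast
    then show ?case
      using elim(2) by blast
  qed
  moreover have "?F K \<in> events" for K
    by measurable
  ultimately show ?thesis
    by (rule ex_prob_pos_if_AE_ex)
qed

lemma (in prob_space) prob_head_near_tail_small_pos:
  fixes X :: "nat \<Rightarrow> 'a \<Rightarrow> 'b::{real_normed_vector, second_countable_topology}"
  assumes indep: "indep_vars (\<lambda>_. borel) X UNIV"
    and ident: "\<And>n. distr M borel (X n) = distr M borel (X 0)"
    and x: "x \<in> rv_support M (X 0)" and "0 < \<delta>"
    and tail: "0 < prob {\<omega> \<in> space M. (\<Sum>n. ennreal (c (n + K) * norm (X (n + K) \<omega> - x))) < \<delta>}"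
  shows "0 < prob {\<omega> \<in> space M. (\<forall>n<K. X n \<omega> \<in> ball x \<delta>) \<and>
    (\<Sum>n. ennreal (c (n + K) * norm (X (n + K) \<omega> - x))) < \<delta>}"
proof -
  have [measurable]: "X n \<in> borel_measurable M" for n
    using indep by (simp add: indep_vars_def)
  have [measurable]: "(\<lambda>f. f (n + K)) \<in> borel_measurable (PiM {K..} (\<lambda>_. borel :: 'b measure))" for n
    by (rule measurable_component_singleton) simp
  define S where "S = PiE {..<K} (\<lambda>_. ball x \<delta>)"
  define T where "T = {f \<in> space (PiM {K..} (\<lambda>_. borel)).
    (\<Sum>n. ennreal (c (n + K) * norm (f (n + K) - x))) < \<delta>}"
  let ?head = "\<lambda>\<omega>. \<lambda>n\<in>{..<K}. X n \<omega>" and ?tail = "\<lambda>\<omega>. \<lambda>n\<in>{K..}. X n \<omega>"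
  have S: "S \<in> sets (PiM {..<K} (\<lambda>_. borel))"
    unfolding S_def by (intro sets_PiM_I_finite) auto
  have T: "T \<in> sets (PiM {K..} (\<lambda>_. borel))"
    unfolding T_def by measurable
  have head: "?head -` S \<inter> space M = {\<omega> \<in> space M. \<forall>n\<in>{..<K}. X n \<omega> \<in> ball x \<delta>}"
    by (auto simp: S_def Pi_iff)
  have tail_eq: "?tail -` T \<inter> space M =
      {\<omega> \<in> space M. (\<Sum>n. ennreal (c (n + K) * norm (X (n + K) \<omega> - x))) < \<delta>}"
    unfolding T_def by (rule set_eqI) (simp add: space_PiM conj_commute)
  have "0 < prob (X n -` ball x \<delta> \<inter> space M)" for n
  proof -
    have "x \<in> rv_support M (X n)"
      using x unfolding rv_support_def ident[of n] .
    then show ?thesis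
      using \<open>0 < \<delta>\<close> by (simp add: in_rv_support_iff emeasure_eq_measure)
  qed
  then have "0 < prob (?head -` S \<inter> space M)"
    unfolding head by (intro indep_vars_prob_all_pos[OF indep]) auto
  then have "0 < prob (?head -` S \<inter> space M) * prob (?tail -` T \<inter> space M)"
    using tail unfolding tail_eq by (rule mult_pos_pos)
  also have "\<dots> = prob (?head -` S \<inter> ?tail -` T \<inter> space M)"
    by (subst indep_vars_prob_restrict_Int[OF indep _ _ _ S T]) auto
  also have "?head -` S \<inter> ?tail -` T \<inter> space M = (?head -` S \<inter> space M) \<inter> (?tail -` T \<inter> space M)"
    by blast
  also have "\<dots> = {\<omega> \<in> space M. (\<forall>n<K. X n \<omega> \<in> ball x \<delta>) \<and>
      (\<Sum>n. ennreal (c (n + K) * norm (X (n + K) \<omega> - x))) < \<delta>}"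
    unfolding head tail_eq by auto
  finally show ?thesis .
qed

lemma (in prob_space) rv_support_subset_rv_support_suminf:
  fixes X :: "nat \<Rightarrow> 'a \<Rightarrow> 'b::{banach, second_countable_topology}"
  assumes indep: "indep_vars (\<lambda>_. borel) X UNIV"
    and ident: "\<And>n. distr M borel (X n) = distr M borel (X 0)"
    and c: "c sums 1" "\<And>n. 0 \<le> c n"
    and summable: "AE \<omega> in M. summable (\<lambda>n. c n * norm (X n \<omega>))"
    and chi: "chi \<in> borel_measurable M"
      "\<And>\<omega>. \<omega> \<in> space M \<Longrightarrow> summable (\<lambda>n. c n * norm (X n \<omega>)) \<Longrightarrow> chi \<omega> = (\<Sum>n. c n *\<^sub>R X n \<omega>)"
  shows "rv_support M (X 0) \<subseteq> rv_support M chi"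
proof
  have X_meas: "X n \<in> borel_measurable M" for n
    using indep by (simp add: indep_vars_def)
  fix x assume x: "x \<in> rv_support M (X 0)"
  show "x \<in> rv_support M chi"
    unfolding in_rv_support_iff[OF chi(1)]
  proof (intro allI impI)
    fix B :: "'b set" assume "open B" "x \<in> B"
    then obtain \<epsilon> where "0 < \<epsilon>" "ball x \<epsilon> \<subseteq> B"
      by (meson openE)
    define \<delta> where "\<delta> = \<epsilon> / 2"
    have "0 < \<delta>"
      using \<open>0 < \<epsilon>\<close> by (simp add: \<delta>_def)
    let ?tail = "\<lambda>K \<omega>. \<Sum>n. ennreal (c (n + K) * norm (X (n + K) \<omega> - x))"
    obtain K where "0 < prob {\<omega> \<in> space M. ?tail K \<omega> < \<delta>}"
      using ex_prob_weighted_tail_less_pos[OF X_meas sums_summable[OF c(1)] c(2) summable \<open>0 < \<delta>\<close>]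
      by blast
    define E where "E = {\<omega> \<in> space M. (\<forall>n<K. X n \<omega> \<in> ball x \<delta>) \<and> ?tail K \<omega> < \<delta>}"
    have "0 < prob E"
      unfolding E_def by (rule prob_head_near_tail_small_pos[OF indep ident x \<open>0 < \<delta>\<close>]) fact
    have "AE \<omega> in M. \<omega> \<in> E \<longrightarrow> \<omega> \<in> chi -` B \<inter> space M"
      using summable
    proof eventually_elim
      case (elim \<omega>)
      show ?case
      proof
        assume "\<omega> \<in> E"
        then have \<omega>: "\<omega> \<in> space M" "\<forall>n<K. X n \<omega> \<in> ball x \<delta>" "?tail K \<omega> < \<delta>"
          by (auto simp: E_def)
        have "norm ((\<Sum>n. c n *\<^sub>R X n \<omega>) - x) < \<delta> + \<delta>"
          using \<omega>(2,3) \<open>0 < \<delta>\<close> by (intro norm_suminf_scaleR_diff_less[OF c elim])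
            (simp_all add: dist_norm norm_minus_commute)
        then have "dist x (chi \<omega>) < \<epsilon>"
          using chi(2)[OF \<omega>(1) elim] by (simp add: \<delta>_def dist_norm norm_minus_commute)
        then show "\<omega> \<in> chi -` B \<inter> space M"
          using \<open>ball x \<epsilon> \<subseteq> B\<close> \<omega>(1) by auto
      qed
    qed
    then have "emeasure M E \<le> emeasure M (chi -` B \<inter> space M)"
      using measurable_sets[OF chi(1) borel_open[OF \<open>open B\<close>]] by (rule emeasure_mono_AE)
    then show "0 < emeasure M (chi -` B \<inter> space M)"
      using \<open>0 < prob E\<close> by (simp add: emeasure_eq_measure)
  qed
qed

theorem lemma6p13:
  fixes M :: "'w measure"
    and X :: "nat \<Rightarrow> 'w \<Rightarrow> 'a::euclidean_space"
    and chi :: "'w \<Rightarrow> 'a"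
    and \<eta> :: real
    and A :: "'w set"
  assumes "prob_space M"
    and "0 < \<eta>" and "\<eta> < 1"
    and meas: "\<And>n. X n \<in> borel_measurable M"
    and indep: "prob_space.indep_vars M (\<lambda>_. borel) X UNIV"
    and ident: "\<And>n. distr M borel (X n) = distr M borel (X 0)"
    and integrable: "integrable M (\<lambda>\<omega>. norm (X 0 \<omega>))"
    and A_def: "A = {\<omega> \<in> space M. summable (\<lambda>n. \<eta> * (1 - \<eta>) ^ n * norm (X n \<omega>))}"
    and chi_meas: "chi \<in> borel_measurable M"
    and chi_eq: "\<And>\<omega>. \<omega> \<in> A \<Longrightarrow> chi \<omega> = (\<Sum>n. (\<eta> * (1 - \<eta>) ^ n) *\<^sub>R X n \<omega>)"
  shows "(A \<in> sets M \<and> measure M A = 1) \<and> rv_support M (X 0) \<subseteq> rv_support M chi"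
proof -
  interpret prob_space M by fact
  define c where "c n = \<eta> * (1 - \<eta>) ^ n" for n
  have c_nonneg: "0 \<le> c n" for n
    using \<open>0 < \<eta>\<close> \<open>\<eta> < 1\<close> by (simp add: c_def)
  have c_sums: "c sums 1"
    unfolding c_def using sums_mult[OF geometric_sums[of "1 - \<eta>"], of \<eta>] \<open>0 < \<eta>\<close> \<open>\<eta> < 1\<close> by simp
  have A_c: "A = {\<omega> \<in> space M. summable (\<lambda>n. c n * norm (X n \<omega>))}"
    by (simp add: A_def c_def)
  have A_sets: "A \<in> sets M"
    unfolding A_c using meas c_nonneg by (intro sets_Collect_summable_nonneg) auto
  have AE_A: "AE \<omega> in M. summable (\<lambda>n. c n * norm (X n \<omega>))"
    using meas ident integrable sums_summable[OF c_sums] c_nonneg by (rule AE_summable_weighted_norm)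
  have "AE \<omega> in M. \<omega> \<in> A"
    using AE_A AE_space by eventually_elim (simp add: A_c)
  then have "measure M A = 1"
    using AE_in_set_eq_1[OF A_sets] by simp
  moreover have "rv_support M (X 0) \<subseteq> rv_support M chi"
    using indep ident c_sums c_nonneg AE_A chi_meas
    by (rule rv_support_subset_rv_support_suminf) (simp add: A_c chi_eq c_def)
  ultimately show ?thesis
    using A_sets by simp
qed

end
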